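(* Let $G=A\star_C B$ be an amalgamated free product. If for some $2\le n\le\infty$ both pairs $(A,C)$ and $(B,C)$ are $n$-RF, then the pairs $(G,A)$ and $(G,B)$ are $n$-RF.
   Context: For a group $G$, subgroup $D$, and $2\le n\le\infty$: $a\in G\setminus D$ is $n$-RF rel $D$ if $a^{e_1}d_1\cdots a^{e_k}d_k\ne\mathrm{id}$ for all $k\ge1$, $e_i\in\{\pm1\}$, $d_i\in D$ such that $d_i\ne\mathrm{id}$ whenever $e_i=-e_{i+1}$ (indices mod $k$), and fewer than $n$ of the $e_i$ are $+1$ and fewer than $n$ are $-1$. The pair $(G,D)$ is $n$-RF if every element of $G\setminus D$ is $n$-RF rel $D$. *)

theory Defs
  imports "HOL-Algebra.Algebra" "HOL-Library.Extended_Nat"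
begin

text \<open>Internal amalgamated free product: G = A *_C B, with A, B subgroups of G,
  C = A \<inter> B, G generated by A \<union> B, and the universal property of the pushout
  (tested against all groups whose carrier lives in the type of lists over the
  carrier type, which is large enough to contain a copy of the abstract amalgam).\<close>
definition amalgamated_free_product ::
  "('a, 'm) monoid_scheme \<Rightarrow> 'a set \<Rightarrow> 'a set \<Rightarrow> 'a set \<Rightarrow> bool" where
  "amalgamated_free_product G A B C \<longleftrightarrow>
     group G \<and> subgroup A G \<and> subgroup B G \<and> A \<inter> B = C \<and>
     generate G (A \<union> B) = carrier G \<and>
     (\<forall>(H :: 'a list monoid) f g. group H \<longrightarrow>
        f \<in> hom (G\<lparr>carrier := A\<rparr>) H \<longrightarrow> g \<in> hom (G\<lparr>carrier := B\<rparr>) H \<longrightarrow>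
        (\<forall>c\<in>C. f c = g c) \<longrightarrow>
        (\<exists>h \<in> hom G H. (\<forall>a\<in>A. h a = f a) \<and> (\<forall>b\<in>B. h b = g b)))"

definition rf_word :: "('a, 'm) monoid_scheme \<Rightarrow> 'a \<Rightarrow> nat \<Rightarrow> (nat \<Rightarrow> int) \<Rightarrow> (nat \<Rightarrow> 'a) \<Rightarrow> 'a" where
  "rf_word G a k e d = foldr (\<lambda>i x. (a [^]\<^bsub>G\<^esub> e i) \<otimes>\<^bsub>G\<^esub> d i \<otimes>\<^bsub>G\<^esub> x) [0..<k] \<one>\<^bsub>G\<^esub>"

definition n_RF_rel :: "('a, 'm) monoid_scheme \<Rightarrow> 'a set \<Rightarrow> enat \<Rightarrow> 'a \<Rightarrow> bool" where
  "n_RF_rel G D n a \<longleftrightarrow> a \<in> carrier G - D \<and>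
     (\<forall>(k::nat) (e::nat \<Rightarrow> int) (d::nat \<Rightarrow> 'a).
        1 \<le> k \<longrightarrow>
        (\<forall>i<k. e i \<in> {1, -1} \<and> d i \<in> D) \<longrightarrow>
        (\<forall>i<k. e i = - e (Suc i mod k) \<longrightarrow> d i \<noteq> \<one>\<^bsub>G\<^esub>) \<longrightarrow>
        enat (card {i. i < k \<and> e i = 1}) < n \<longrightarrow>
        enat (card {i. i < k \<and> e i = -1}) < n \<longrightarrow>
        rf_word G a k e d \<noteq> \<one>\<^bsub>G\<^esub>)"

definition n_RF_pair :: "('a, 'm) monoid_scheme \<Rightarrow> 'a set \<Rightarrow> enat \<Rightarrow> bool" where
  "n_RF_pair G D n \<longleftrightarrow> (\<forall>a \<in> carrier G - D. n_RF_rel G D n a)"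

end

theory Submission
  imports Defs
begin

(* Let a be an element of G = A *_C B outside A. By the normal form theorem, a = U x V where x is a
   single syllable from A - C or B - C, U is an element of A followed by a reduced word, and V is a
   reduced word of the same length followed by an element of A. Conjugating by U turns a cyclic word
   a^e1 d1 ... a^ek dk with d_i in A into x^e1 J1 ... x^ek Jk with J_i = R d_i L, R in {V, U^-1} and
   L in {U, V^-1}; such a J_i lies in C or is a reduced word beginning and ending in the factor that
   does not contain x, and the cancellation conditions and exponent counts are unchanged.
   If all J_i lie in C, the n-RF property of x relative to C in its own factor applies directly.
   Otherwise rotate the word so that it ends with some J_i outside C. Each maximal stretch of letters
   from C, closed off by a power of x, is then an element of the factor of x outside C (again by the
   n-RF property), and these elements alternate with reduced words from the other factor. Hence the
   normal form of the word begins with a syllable from the factor of x, and the word is not 1.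
   The normal form theorem itself is proved by van der Waerden's method: A and B act on the set of
   normal forms, and the universal property of the amalgam assembles these actions into a
   homomorphism from G to the group of normal forms which is inverse to multiplying out. *)

section \<open>Words in a single element with letters from a subgroup\<close>

definition list_prod :: "('a, 'm) monoid_scheme \<Rightarrow> 'a list \<Rightarrow> 'a" where
  "list_prod G xs = foldr (\<otimes>\<^bsub>G\<^esub>) xs \<one>\<^bsub>G\<^esub>"

definition pow_word :: "('a, 'm) monoid_scheme \<Rightarrow> 'a \<Rightarrow> (int \<times> 'a) list \<Rightarrow> 'a" where
  "pow_word G x ws = list_prod G (map (\<lambda>p. x [^]\<^bsub>G\<^esub> fst p \<otimes>\<^bsub>G\<^esub> snd p) ws)"

lemma list_prod_Nil [simp]: "list_prod G [] = \<one>\<^bsub>G\<^esub>"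
  by (simp add: list_prod_def)

lemma list_prod_Cons [simp]: "list_prod G (x # xs) = x \<otimes>\<^bsub>G\<^esub> list_prod G xs"
  by (simp add: list_prod_def)

lemma pow_word_Nil [simp]: "pow_word G x [] = \<one>\<^bsub>G\<^esub>"
  by (simp add: pow_word_def)

lemma pow_word_Cons [simp]:
  "pow_word G x (p # ws) = x [^]\<^bsub>G\<^esub> fst p \<otimes>\<^bsub>G\<^esub> snd p \<otimes>\<^bsub>G\<^esub> pow_word G x ws"
  by (simp add: pow_word_def)

lemma rf_word_eq_list_prod: "rf_word G a k e d = list_prod G (map (\<lambda>i. a [^]\<^bsub>G\<^esub> e i \<otimes>\<^bsub>G\<^esub> d i) [0..<k])"
  by (simp add: rf_word_def list_prod_def foldr_map o_def)

lemma rf_word_eq_pow_word: "rf_word G a k e d = pow_word G a (map (\<lambda>i. (e i, d i)) [0..<k])"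
  by (simp add: rf_word_def pow_word_def list_prod_def foldr_map o_def)

definition no_cancel :: "('a, 'm) monoid_scheme \<Rightarrow> int \<times> 'a \<Rightarrow> int \<times> 'a \<Rightarrow> bool" where
  "no_cancel G p q \<longleftrightarrow> (fst p = - fst q \<longrightarrow> snd p \<noteq> \<one>\<^bsub>G\<^esub>)"

definition exp_count :: "int \<Rightarrow> (int \<times> 'a) list \<Rightarrow> nat" where
  "exp_count v ws = length (filter (\<lambda>p. fst p = v) ws)"

definition admissible :: "('a, 'm) monoid_scheme \<Rightarrow> 'a set \<Rightarrow> enat \<Rightarrow> (int \<times> 'a) list \<Rightarrow> bool" where
  "admissible G D n ws \<longleftrightarrow> ws \<noteq> [] \<and> (\<forall>p\<in>set ws. fst p \<in> {1, -1} \<and> snd p \<in> D) \<and>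
     successively (no_cancel G) ws \<and> enat (exp_count 1 ws) < n \<and> enat (exp_count (-1) ws) < n"

definition cyclic_admissible :: "('a, 'm) monoid_scheme \<Rightarrow> 'a set \<Rightarrow> enat \<Rightarrow> (int \<times> 'a) list \<Rightarrow> bool" where
  "cyclic_admissible G D n ws \<longleftrightarrow> admissible G D n ws \<and> no_cancel G (last ws) (hd ws)"

definition RF_words :: "('a, 'm) monoid_scheme \<Rightarrow> 'a set \<Rightarrow> enat \<Rightarrow> 'a \<Rightarrow> bool" where
  "RF_words G D n x \<longleftrightarrow> (\<forall>ws. cyclic_admissible G D n ws \<longrightarrow> pow_word G x ws \<noteq> \<one>\<^bsub>G\<^esub>)"

lemma cyclic_admissible_upt_iff:
  "cyclic_admissible G D n (map (\<lambda>i. (e i, d i)) [0..<k]) \<longleftrightarrow>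
     1 \<le> k \<and> (\<forall>i<k. e i \<in> {1, -1} \<and> d i \<in> D) \<and> (\<forall>i<k. e i = - e (Suc i mod k) \<longrightarrow> d i \<noteq> \<one>\<^bsub>G\<^esub>) \<and>
     enat (card {i. i < k \<and> e i = 1}) < n \<and> enat (card {i. i < k \<and> e i = -1}) < n"
proof -
  have count: "exp_count v (map (\<lambda>i. (e i, d i)) [0..<k]) = card {i. i < k \<and> e i = v}" for v
    unfolding exp_count_def length_filter_conv_card by (rule arg_cong[where f = card]) auto
  have cyclic: "successively (no_cancel G) (map (\<lambda>i. (e i, d i)) [0..<k]) \<and>
      no_cancel G (e (k - 1), d (k - 1)) (e 0, d 0) \<longleftrightarrow>
      (\<forall>i<k. e i = - e (Suc i mod k) \<longrightarrow> d i \<noteq> \<one>\<^bsub>G\<^esub>)" if "1 \<le> k"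
  proof -
    let ?Q = "\<lambda>i. e i = - e (Suc i mod k) \<longrightarrow> d i \<noteq> \<one>\<^bsub>G\<^esub>"
    have "successively (no_cancel G) (map (\<lambda>i. (e i, d i)) [0..<k]) \<longleftrightarrow> (\<forall>i. Suc i < k \<longrightarrow> ?Q i)"
      by (simp add: successively_conv_nth no_cancel_def)
    moreover have "no_cancel G (e (k - 1), d (k - 1)) (e 0, d 0) \<longleftrightarrow> ?Q (k - 1)"
      using that by (simp add: no_cancel_def)
    moreover have "(\<forall>i<k. ?Q i) \<longleftrightarrow> (\<forall>i. Suc i < k \<longrightarrow> ?Q i) \<and> ?Q (k - 1)"
    proof -
      have "i < k \<longleftrightarrow> Suc i < k \<or> i = k - 1" for i using that by arith
      then show ?thesis by (metis that Suc_le_lessD Suc_pred' lessI)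
    qed
    ultimately show ?thesis by blast
  qed
  show ?thesis
  proof (cases "1 \<le> k")
    case True
    then show ?thesis
      using cyclic[OF True] by (auto simp: cyclic_admissible_def admissible_def count last_map hd_map)
  qed (simp add: cyclic_admissible_def admissible_def)
qed

lemma all_lists_as_upt: "(\<forall>ws. P ws) \<longleftrightarrow> (\<forall>k e d. P (map (\<lambda>i. (e i, d i)) [0..<k]))"
proof
  assume "\<forall>k e d. P (map (\<lambda>i. (e i, d i)) [0..<k])"
  moreover have "ws = map (\<lambda>i. (fst (ws ! i), snd (ws ! i))) [0..<length ws]" for ws :: "('a \<times> 'b) list"
    by (simp add: map_nth)
  ultimately show "\<forall>ws. P ws" by metis
qed simp

lemma n_RF_rel_iff_RF_words: "n_RF_rel G D n x \<longleftrightarrow> x \<in> carrier G - D \<and> RF_words G D n x"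
proof -
  have "RF_words G D n x \<longleftrightarrow> (\<forall>k e d. cyclic_admissible G D n (map (\<lambda>i. (e i, d i)) [0..<k]) \<longrightarrow>
      rf_word G x k e d \<noteq> \<one>\<^bsub>G\<^esub>)"
    unfolding RF_words_def rf_word_eq_pow_word by (rule all_lists_as_upt)
  then show ?thesis by (simp add: n_RF_rel_def cyclic_admissible_upt_iff imp_conjL)
qed

lemma admissible_infix:
  assumes "admissible G D n (xs @ ys @ zs)" "ys \<noteq> []"
  shows "admissible G D n ys"
proof -
  have "enat (exp_count v ys) < n" if "enat (exp_count v (xs @ ys @ zs)) < n" for v
    using that by (rule le_less_trans[rotated]) (simp add: exp_count_def)
  then show ?thesis
    using assms by (auto simp: admissible_def successively_append_iff)
qed

lemma admissible_snoc_replace: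
  assumes "admissible G D n (xs @ [(e, d)])" "\<forall>p\<in>set xs. snd p \<in> D'" "d' \<in> D'"
  shows "admissible G D' n (xs @ [(e, d')])"
  using assms by (auto simp: admissible_def successively_append_iff no_cancel_def exp_count_def)

lemma cyclic_admissible_rotate:
  assumes "cyclic_admissible G D n (xs @ ys)"
  shows "cyclic_admissible G D n (ys @ xs)"
proof (cases "xs = [] \<or> ys = []")
  case True
  then show ?thesis using assms by auto
next
  case False
  then show ?thesis
    using assms
    by (auto simp: cyclic_admissible_def admissible_def successively_append_iff exp_count_def add.commute)
qed

context group
begin

lemma inv_mult_cancel [simp]: "x \<in> carrier G \<Longrightarrow> y \<in> carrier G \<Longrightarrow> inv x \<otimes> (x \<otimes> y) = y"
  by (simp add: m_assoc [symmetric])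

lemma mult_inv_cancel [simp]: "x \<in> carrier G \<Longrightarrow> y \<in> carrier G \<Longrightarrow> x \<otimes> (inv x \<otimes> y) = y"
  by (simp add: m_assoc [symmetric])

lemma list_prod_closed [intro, simp]: "set xs \<subseteq> carrier G \<Longrightarrow> list_prod G xs \<in> carrier G"
  by (induction xs) auto

lemma list_prod_append:
  "set xs \<subseteq> carrier G \<Longrightarrow> set ys \<subseteq> carrier G \<Longrightarrow> list_prod G (xs @ ys) = list_prod G xs \<otimes> list_prod G ys"
  by (induction xs) (auto simp: m_assoc)

lemma inv_list_prod: "set xs \<subseteq> carrier G \<Longrightarrow> inv (list_prod G xs) = list_prod G (rev (map (m_inv G) xs))"
proof (induction xs)
  case (Cons x xs)
  then have "set (rev (map (m_inv G) xs)) \<subseteq> carrier G" by auto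
  then show ?case using Cons by (simp add: inv_mult_group list_prod_append)
qed simp

lemma conj_eq_one_iff:
  assumes "y \<in> carrier G" "w \<in> carrier G"
  shows "y \<otimes> w \<otimes> inv y = \<one> \<longleftrightarrow> w = \<one>"
proof -
  have "y \<otimes> w \<otimes> inv y = \<one> \<longleftrightarrow> y \<otimes> w = \<one> \<otimes> y"
    using assms inv_solve_right[of \<one> "y \<otimes> w" y] by auto
  then show ?thesis using assms by (simp add: l_cancel_one)
qed

lemma pow_word_closed [intro, simp]:
  "x \<in> carrier G \<Longrightarrow> \<forall>p\<in>set ws. snd p \<in> carrier G \<Longrightarrow> pow_word G x ws \<in> carrier G"
  by (induction ws) auto

lemma pow_word_append:
  assumes "x \<in> carrier G" "\<forall>p\<in>set xs. snd p \<in> carrier G" "\<forall>p\<in>set ys. snd p \<in> carrier G"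
  shows "pow_word G x (xs @ ys) = pow_word G x xs \<otimes> pow_word G x ys"
  using assms by (induction xs) (auto simp: m_assoc)

lemma pow_word_in_subgroup:
  assumes "subgroup H G" "x \<in> H" "\<forall>p\<in>set ws. snd p \<in> H"
  shows "pow_word G x ws \<in> H"
  using assms(3) by (induction ws) (auto intro: subgroup.m_closed[OF assms(1)] subgroup_int_pow_closed[OF assms(1,2)]
      subgroup.one_closed[OF assms(1)])

lemma RF_words_subgroup_iff:
  assumes "subgroup H G" "x \<in> H"
  shows "RF_words (G\<lparr>carrier := H\<rparr>) D n x \<longleftrightarrow> RF_words G D n x"
proof -
  have "pow_word (G\<lparr>carrier := H\<rparr>) x ws = pow_word G x ws" for ws
    using int_pow_consistent[OF assms] by (simp add: pow_word_def list_prod_def)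
  moreover have "no_cancel (G\<lparr>carrier := H\<rparr>) = no_cancel G"
    by (intro ext) (simp add: no_cancel_def)
  then have "cyclic_admissible (G\<lparr>carrier := H\<rparr>) = cyclic_admissible G"
    by (intro ext) (simp add: cyclic_admissible_def admissible_def)
  ultimately show ?thesis by (simp add: RF_words_def)
qed

lemma list_prod_telescope:
  assumes "\<And>i. i < k \<Longrightarrow> f i = L i \<otimes> g i \<otimes> inv (L (Suc i))"
    and "\<And>i. i \<le> k \<Longrightarrow> L i \<in> carrier G" "\<And>i. i < k \<Longrightarrow> g i \<in> carrier G"
  shows "list_prod G (map f [0..<k]) = L 0 \<otimes> list_prod G (map g [0..<k]) \<otimes> inv (L k)"
  using assms
proof (induction k)
  case 0
  then show ?case by simp
next
  case (Suc k)
  have closed: "L 0 \<in> carrier G" "L k \<in> carrier G" "L (Suc k) \<in> carrier G" "g k \<in> carrier G"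
    "set (map g [0..<k]) \<subseteq> carrier G" "set (map f [0..<k]) \<subseteq> carrier G"
    using Suc.prems by auto
  have "list_prod G (map f [0..<Suc k]) = list_prod G (map f [0..<k]) \<otimes> f k"
    using Suc.prems closed by (simp add: list_prod_append)
  also have "\<dots> = (L 0 \<otimes> list_prod G (map g [0..<k]) \<otimes> inv (L k)) \<otimes> (L k \<otimes> g k \<otimes> inv (L (Suc k)))"
    using Suc by simp
  also have "\<dots> = L 0 \<otimes> (list_prod G (map g [0..<k]) \<otimes> g k) \<otimes> inv (L (Suc k))"
    using closed by (simp add: m_assoc)
  also have "list_prod G (map g [0..<k]) \<otimes> g k = list_prod G (map g [0..<Suc k])"
    using closed by (simp add: list_prod_append)
  finally show ?case .
qed

lemma rf_word_sandwich:
  fixes U V :: 'a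
  defines "l \<equiv> \<lambda>v :: int. if v = 1 then U else inv V" and "r \<equiv> \<lambda>v :: int. if v = 1 then V else inv U"
  assumes closed: "U \<in> carrier G" "x \<in> carrier G" "V \<in> carrier G" "\<And>i. i < k \<Longrightarrow> d i \<in> carrier G"
    and k: "1 \<le> k" and e: "\<And>i. i < k \<Longrightarrow> e i \<in> {1, -1}"
  shows "rf_word G (U \<otimes> x \<otimes> V) k e d =
    l (e 0) \<otimes> rf_word G x k e (\<lambda>i. r (e i) \<otimes> d i \<otimes> l (e (Suc i mod k))) \<otimes> inv (l (e 0))"
proof -
  have lr: "l v \<in> carrier G" "r v \<in> carrier G" for v using closed by (simp_all add: l_def r_def)
  have pow: "(U \<otimes> x \<otimes> V) [^] v = l v \<otimes> x [^] v \<otimes> r v" if "v \<in> {1, -1}" for v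
    using that closed by (auto simp: l_def r_def int_pow_neg inv_mult_group m_assoc)
  let ?L = "\<lambda>i. l (e (i mod k))"
  have "(U \<otimes> x \<otimes> V) [^] e i \<otimes> d i =
      ?L i \<otimes> (x [^] e i \<otimes> (r (e i) \<otimes> d i \<otimes> l (e (Suc i mod k)))) \<otimes> inv (?L (Suc i))" if "i < k" for i
    using that closed lr pow[OF e[OF that]] by (simp add: m_assoc)
  then have "rf_word G (U \<otimes> x \<otimes> V) k e d =
      ?L 0 \<otimes> rf_word G x k e (\<lambda>i. r (e i) \<otimes> d i \<otimes> l (e (Suc i mod k))) \<otimes> inv (?L k)"
    unfolding rf_word_eq_list_prod using closed lr by (intro list_prod_telescope) auto
  then show ?thesis using k by simp
qed

lemma pow_word_snoc_mult:
  assumes "x \<in> carrier G" "\<forall>p\<in>set ws. snd p \<in> carrier G" "d \<in> carrier G" "y \<in> carrier G"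
  shows "pow_word G x (ws @ [(e, d \<otimes> y)]) = pow_word G x (ws @ [(e, d)]) \<otimes> y"
  using assms by (simp add: pow_word_append m_assoc)

lemma pow_word_Cons_snoc_inverse:
  assumes "x \<in> carrier G" "\<forall>p\<in>set ws. snd p \<in> carrier G" "d \<in> carrier G" "y \<in> carrier G"
  shows "pow_word G x ((e, d) # ws @ [(- e, y)]) = x [^] e \<otimes> (d \<otimes> pow_word G x ws) \<otimes> inv (x [^] e) \<otimes> y"
  using assms by (simp add: pow_word_append int_pow_neg m_assoc)

lemma RF_words_pow_word_in_shape:
  assumes D: "subgroup D G" and RF: "RF_words G D n x" and x: "x \<in> carrier G"
    and ws: "admissible G D n (init @ [(e, d)])" and in_D: "pow_word G x (init @ [(e, d)]) \<in> D"
  obtains e1 d1 mid where "init = (e1, d1) # mid" "e = - e1" "d = pow_word G x (init @ [(e, d)])"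
proof -
  define c where "c = pow_word G x (init @ [(e, d)])"
  have ed: "e \<in> {1, -1}" "d \<in> D" and init_D: "\<forall>p\<in>set init. snd p \<in> D"
    using ws by (auto simp: admissible_def)
  have closed: "d \<in> carrier G" "c \<in> carrier G" "\<forall>p\<in>set init. snd p \<in> carrier G"
    using ed(2) in_D init_D subgroup.mem_carrier[OF D] by (auto simp: c_def)
  \<comment> \<open>Replacing the last letter d by d c\<inverse> gives an admissible word representing 1, so by the RF
    property this word violates the cyclic condition.\<close>
  define ws' where "ws' = init @ [(e, d \<otimes> inv c)]"
  have "pow_word G x ws' = \<one>"
    using pow_word_snoc_mult[OF x closed(3,1) inv_closed[OF closed(2)], of e] closed(2)
    by (simp add: ws'_def c_def[symmetric])
  moreover have "d \<otimes> inv c \<in> D"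
    using ed in_D D by (simp add: c_def subgroup.m_closed subgroup.m_inv_closed)
  then have "admissible G D n ws'"
    unfolding ws'_def using ws init_D by (rule admissible_snoc_replace[rotated 2])
  ultimately have "\<not> no_cancel G (last ws') (hd ws')"
    using RF by (auto simp: RF_words_def cyclic_admissible_def)
  then obtain e1 d1 mid where "init = (e1, d1) # mid" "e = - e1" "d \<otimes> inv c = \<one>"
    using ed by (cases init) (auto simp: ws'_def no_cancel_def)
  moreover from this(3) have "d = c" using closed inv_solve_right[of \<one> d c] by simp
  ultimately show ?thesis using that[of e1 d1 mid] unfolding c_def by blast
qed

lemma RF_words_pow_word_notin:
  assumes D: "subgroup D G" and RF: "RF_words G D n x" and x: "x \<in> carrier G"
  shows "admissible G D n ws \<Longrightarrow> pow_word G x ws \<notin> D"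
proof (induction ws rule: length_induct)
  case (1 ws)
  define c where "c = pow_word G x ws"
  show ?case
  proof
    assume "pow_word G x ws \<in> D"
    then have c: "c \<in> D" "c \<in> carrier G" using subgroup.mem_carrier[OF D] by (auto simp: c_def)
    obtain init e d where ws: "ws = init @ [(e, d)]"
      using "1.prems" by (metis admissible_def prod.exhaust rev_exhaust)
    then obtain e1 d1 mid where init: "init = (e1, d1) # mid" and e: "e = - e1" and d: "d = c"
      using RF_words_pow_word_in_shape[OF D RF x] "1.prems" c by (metis c_def)
    then have ws_c: "ws = (e1, d1) # mid @ [(- e1, c)]" by (simp add: ws)
    have d1: "d1 \<in> D" "d1 \<in> carrier G" and mid_carrier: "\<forall>p\<in>set mid. snd p \<in> carrier G"
      using "1.prems" subgroup.mem_carrier[OF D] by (auto simp: ws_c admissible_def)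
    \<comment> \<open>The word ws = x^e1 d1 mid x^(-e1) c has value c, so d1 mid has value 1.\<close>
    let ?y = "x [^] e1" and ?m = "pow_word G x mid"
    have "c = ?y \<otimes> (d1 \<otimes> ?m) \<otimes> inv ?y \<otimes> c"
      using c_def[unfolded ws_c] pow_word_Cons_snoc_inverse[OF x mid_carrier d1(2) c(2)] by (rule trans)
    then have "?y \<otimes> (d1 \<otimes> ?m) \<otimes> inv ?y = \<one>"
      using x d1 c mid_carrier by (metis inv_closed int_pow_closed m_closed pow_word_closed r_cancel_one)
    then have d1_m: "d1 \<otimes> ?m = \<one>"
      using x d1 mid_carrier by (simp add: conj_eq_one_iff)
    show False
    proof (cases "mid = []")
      case True
      then have "no_cancel G (e1, d1) (- e1, c)"
        using "1.prems" by (simp add: admissible_def ws_c)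
      moreover have "d1 = \<one>" using d1_m True d1 by simp
      ultimately show False by (simp add: no_cancel_def)
    next
      case False
      have "admissible G D n mid"
        using "1.prems" False admissible_infix[of G D n "[(e1, d1)]" mid "[(- e1, c)]"] by (simp add: ws_c)
      then have "?m \<notin> D" using "1.IH" by (simp add: ws_c)
      moreover have "?m = inv d1"
        using d1_m x d1 mid_carrier by (metis inv_comm inv_equality pow_word_closed)
      ultimately show False using subgroup.m_inv_closed[OF D d1(1)] by simp
    qed
  qed
qed

lemma RF_words_pow_word_prefix:
  assumes D: "subgroup D G" and H: "subgroup H G" "D \<subseteq> H" and RF: "RF_words G D n x" and x: "x \<in> H"
    and ws: "admissible G D' n (seg @ [q])" and seg: "\<forall>p\<in>set seg. snd p \<in> D"
  shows "pow_word G x (seg @ [(fst q, \<one>)]) \<in> H - D"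
proof
  have "admissible G D n (seg @ [(fst q, \<one>)])"
    using admissible_snoc_replace[of G D' n seg "fst q" "snd q" D \<one>] ws seg subgroup.one_closed[OF D] by simp
  then show "pow_word G x (seg @ [(fst q, \<one>)]) \<notin> D"
    using RF_words_pow_word_notin[OF D RF] subgroup.mem_carrier[OF H(1) x] by blast
  show "pow_word G x (seg @ [(fst q, \<one>)]) \<in> H"
    using seg H x subgroup.one_closed[OF H(1)] by (intro pow_word_in_subgroup) auto
qed

end

section \<open>Normal forms in an amalgamated free product\<close>

locale amalgam = group G for G (structure) +
  fixes A B C :: "'a set"
  assumes amalgam: "amalgamated_free_product G A B C"
begin

lemma subgroup_A: "subgroup A G"
  and subgroup_B: "subgroup B G"
  and A_Int_B: "A \<inter> B = C"
  and generate_A_Un_B: "generate G (A \<union> B) = carrier G"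
  using amalgam by (simp_all add: amalgamated_free_product_def)

lemma universal_property:
  fixes H :: "'a list monoid"
  assumes "group H" "f \<in> hom (G\<lparr>carrier := A\<rparr>) H" "g \<in> hom (G\<lparr>carrier := B\<rparr>) H" "\<forall>c\<in>C. f c = g c"
  shows "\<exists>h \<in> hom G H. (\<forall>a\<in>A. h a = f a) \<and> (\<forall>b\<in>B. h b = g b)"
  using amalgam assms unfolding amalgamated_free_product_def by blast

definition factor :: "bool \<Rightarrow> 'a set" where
  "factor K = (if K then A else B)"

definition side :: "'a \<Rightarrow> bool" where
  "side x \<longleftrightarrow> x \<in> A"

lemma factor_simps [simp]: "factor True = A" "factor False = B"
  by (simp_all add: factor_def)

lemma subgroup_factor: "subgroup (factor K) G"
  using subgroup_A subgroup_B by (simp add: factor_def)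

lemma subgroup_C: "subgroup C G"
  using subgroup_Int[OF subgroup_A subgroup_B] by (simp add: A_Int_B)

lemma factor_carrier: "x \<in> factor K \<Longrightarrow> x \<in> carrier G"
  by (rule subgroup.mem_carrier[OF subgroup_factor])

lemma factor_m_closed: "x \<in> factor K \<Longrightarrow> y \<in> factor K \<Longrightarrow> x \<otimes> y \<in> factor K"
  by (rule subgroup.m_closed[OF subgroup_factor])

lemma factor_inv_closed: "x \<in> factor K \<Longrightarrow> inv x \<in> factor K"
  by (rule subgroup.m_inv_closed[OF subgroup_factor])

lemma C_carrier: "x \<in> C \<Longrightarrow> x \<in> carrier G"
  by (rule subgroup.mem_carrier[OF subgroup_C])

lemma C_m_closed: "x \<in> C \<Longrightarrow> y \<in> C \<Longrightarrow> x \<otimes> y \<in> C"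
  by (rule subgroup.m_closed[OF subgroup_C])

lemma C_inv_closed: "x \<in> C \<Longrightarrow> inv x \<in> C"
  by (rule subgroup.m_inv_closed[OF subgroup_C])

lemma one_C [simp]: "\<one> \<in> C"
  by (rule subgroup.one_closed[OF subgroup_C])

lemma C_subset_factor: "x \<in> C \<Longrightarrow> x \<in> factor K"
  using A_Int_B by (auto simp: factor_def)

lemma AB_carrier: "x \<in> A \<union> B \<Longrightarrow> x \<in> carrier G"
  using subgroup.mem_carrier[OF subgroup_A] subgroup.mem_carrier[OF subgroup_B] by blast

lemma side_factor: "x \<in> factor K \<Longrightarrow> x \<notin> C \<Longrightarrow> side x = K"
  using A_Int_B by (auto simp: factor_def side_def split: if_splits)

lemma in_factor_side: "x \<in> A \<union> B \<Longrightarrow> x \<in> factor (side x)"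
  by (auto simp: factor_def side_def)

lemma side_inv: "x \<in> carrier G \<Longrightarrow> side (inv x) = side x"
  using subgroup.m_inv_closed[OF subgroup_A] by (metis inv_inv side_def)

lemma C_mult_left_iff: "c \<in> C \<Longrightarrow> x \<in> carrier G \<Longrightarrow> c \<otimes> x \<in> C \<longleftrightarrow> x \<in> C"
  by (metis C_carrier C_inv_closed C_m_closed inv_mult_cancel)

lemma C_mult_right_iff: "c \<in> C \<Longrightarrow> x \<in> carrier G \<Longrightarrow> x \<otimes> c \<in> C \<longleftrightarrow> x \<in> C"
  by (metis C_carrier C_inv_closed C_m_closed m_assoc r_inv r_one)

definition rep :: "'a \<Rightarrow> 'a" where
  "rep a = (SOME s. s \<in> C #> a)"

lemma rep_in_rcos: "a \<in> carrier G \<Longrightarrow> rep a \<in> C #> a"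
  unfolding rep_def by (rule someI[of _ a]) (rule rcos_self[OF _ subgroup_C])

lemma rep_eq: assumes "a \<in> carrier G" obtains c where "c \<in> C" "rep a = c \<otimes> a"
  using rep_in_rcos[OF assms] by (auto simp: r_coset_def)

lemma rep_C_mult: assumes "c \<in> C" "a \<in> carrier G" shows "rep (c \<otimes> a) = rep a"
proof -
  have "C #> (c \<otimes> a) = C #> a"
    using assms coset_mult_assoc[of C c a] subgroup.rcos_const[OF subgroup_C is_group]
    by (simp add: C_carrier subset_iff)
  then show ?thesis by (simp add: rep_def)
qed

lemma rep_closed: "a \<in> carrier G \<Longrightarrow> rep a \<in> carrier G"
  by (metis C_carrier m_closed rep_eq)

lemma rep_in_factor: "a \<in> factor K \<Longrightarrow> rep a \<in> factor K"
  by (metis C_subset_factor factor_carrier factor_m_closed rep_eq)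

lemma rep_notin_C: "a \<in> carrier G \<Longrightarrow> a \<notin> C \<Longrightarrow> rep a \<notin> C"
  by (metis C_mult_left_iff rep_eq)

lemma rep_rep: "a \<in> carrier G \<Longrightarrow> rep (rep a) = rep a"
  by (metis rep_C_mult rep_eq)

lemma mult_inv_rep_in_C: "a \<in> carrier G \<Longrightarrow> a \<otimes> inv (rep a) \<in> C"
  by (metis C_carrier C_inv_closed inv_mult_group m_assoc mult_inv_cancel r_inv rep_eq inv_closed r_one)

definition reduced :: "'a list \<Rightarrow> bool" where
  "reduced ys \<longleftrightarrow> (\<forall>y\<in>set ys. y \<in> A \<union> B - C) \<and> successively (\<lambda>s t. side s \<noteq> side t) ys"

definition starts_in :: "bool \<Rightarrow> 'a list \<Rightarrow> bool" where
  "starts_in K ys \<longleftrightarrow> ys \<noteq> [] \<and> side (hd ys) = K"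

definition nf_tail :: "'a list \<Rightarrow> bool" where
  "nf_tail ss \<longleftrightarrow> reduced ss \<and> (\<forall>s\<in>set ss. rep s = s)"

definition normal_forms :: "'a list set" where
  "normal_forms = {c # ss | c ss. c \<in> C \<and> nf_tail ss}"

lemma starts_in_simps [simp]: "\<not> starts_in K []" "starts_in K (s # ss) \<longleftrightarrow> side s = K"
  by (simp_all add: starts_in_def)

lemma reduced_Nil [simp]: "reduced []"
  by (simp add: reduced_def)

lemma reduced_Cons: "reduced (y # ys) \<longleftrightarrow> y \<in> A \<union> B - C \<and> reduced ys \<and> \<not> starts_in (side y) ys"
  by (cases ys) (auto simp: reduced_def)

lemma reduced_append:
  "reduced (xs @ ys) \<longleftrightarrow> reduced xs \<and> reduced ys \<and> (xs = [] \<or> \<not> starts_in (side (last xs)) ys)"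
  by (cases ys) (auto simp: reduced_def successively_append_iff)

lemma reduced_carrier: "reduced ys \<Longrightarrow> set ys \<subseteq> carrier G"
  using AB_carrier by (auto simp: reduced_def)

lemma reduced_in_factor_side: "reduced ys \<Longrightarrow> y \<in> set ys \<Longrightarrow> y \<in> factor (side y) - C"
  using in_factor_side by (auto simp: reduced_def)

lemma nf_tail_Nil [simp]: "nf_tail []"
  by (simp add: nf_tail_def)

lemma nf_tail_Cons:
  "nf_tail (s # ss) \<longleftrightarrow> s \<in> A \<union> B - C \<and> rep s = s \<and> nf_tail ss \<and> \<not> starts_in (side s) ss"
  by (auto simp: nf_tail_def reduced_Cons)

lemma nf_tail_reduced: "nf_tail ss \<Longrightarrow> reduced ss"
  by (simp add: nf_tail_def)

lemma nf_tail_AB: "nf_tail ss \<Longrightarrow> set ss \<subseteq> A \<union> B"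
  by (auto simp: nf_tail_def reduced_def)

lemma Cons_in_normal_forms [simp]: "c # ss \<in> normal_forms \<longleftrightarrow> c \<in> C \<and> nf_tail ss"
  by (simp add: normal_forms_def)

lemma Nil_notin_normal_forms [simp]: "[] \<notin> normal_forms"
  by (simp add: normal_forms_def)

lemma normal_formsE:
  assumes "x \<in> normal_forms"
  obtains c ss where "x = c # ss" "c \<in> C" "nf_tail ss"
  using assms by (auto simp: normal_forms_def)

lemma normal_forms_carrier: "x \<in> normal_forms \<Longrightarrow> set x \<subseteq> carrier G"
  by (auto elim!: normal_formsE dest!: nf_tail_reduced reduced_carrier simp: C_carrier)

lemma normal_forms_AB: "x \<in> normal_forms \<Longrightarrow> set x \<subseteq> A \<union> B"
  using C_subset_factor[of _ True] by (auto elim!: normal_formsE simp: nf_tail_def reduced_def)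

text \<open>A normal form c s1 ... sm consists of an element c of C followed by right coset
  representatives si of C taken alternately from A - C and B - C. Factor K acts on normal forms through its leading syllable:
  split_nf K splits off the part of a normal form lying in factor K, join_nf puts an element of
  factor K back in front.\<close>

fun split_nf :: "bool \<Rightarrow> 'a list \<Rightarrow> 'a \<times> 'a list" where
  "split_nf K (c # s # ss) = (if side s = K then (c \<otimes> s, ss) else (c, s # ss))"
| "split_nf K [c] = (c, [])"
| "split_nf K [] = (\<one>, [])"

definition join_nf :: "'a \<Rightarrow> 'a list \<Rightarrow> 'a list" where
  "join_nf g ys = (if g \<in> C then g # ys else (g \<otimes> inv (rep g)) # rep g # ys)"

definition factor_act :: "bool \<Rightarrow> 'a \<Rightarrow> 'a list \<Rightarrow> 'a list" where
  "factor_act K g x = join_nf (g \<otimes> fst (split_nf K x)) (snd (split_nf K x))"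

definition letter_act :: "'a \<Rightarrow> 'a list \<Rightarrow> 'a list" where
  "letter_act l = factor_act (side l) l"

definition word_act :: "'a list \<Rightarrow> 'a list \<Rightarrow> 'a list" where
  "word_act ys x = foldr letter_act ys x"

lemma word_act_simps [simp]:
  "word_act [] x = x" "word_act (l # ys) x = letter_act l (word_act ys x)"
  "word_act (xs @ ys) x = word_act xs (word_act ys x)"
  by (simp_all add: word_act_def)

lemma split_nf_not_starts_in: "\<not> starts_in K ss \<Longrightarrow> split_nf K (c # ss) = (c, ss)"
  by (cases ss) auto

lemma split_nf_normal:
  assumes "x \<in> normal_forms"
  shows "fst (split_nf K x) \<in> factor K \<and> nf_tail (snd (split_nf K x)) \<and> \<not> starts_in K (snd (split_nf K x))"
proof -
  obtain c ss where x: "x = c # ss" "c \<in> C" "nf_tail ss" using assms by (rule normal_formsE)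
  show ?thesis
  proof (cases ss)
    case Nil
    then show ?thesis using x C_subset_factor by simp
  next
    case (Cons s ss')
    then have s: "s \<in> factor (side s)" "nf_tail ss'" "\<not> starts_in (side s) ss'"
      using x in_factor_side by (auto simp: nf_tail_Cons)
    show ?thesis
    proof (cases "side s = K")
      case True
      then show ?thesis using x Cons s C_subset_factor factor_m_closed by auto
    next
      case False
      then show ?thesis using x Cons C_subset_factor by simp
    qed
  qed
qed

lemma join_nf_normal:
  assumes "g \<in> factor K" "nf_tail ys" "\<not> starts_in K ys"
  shows "join_nf g ys \<in> normal_forms"
proof (cases "g \<in> C")
  case False
  have g: "g \<in> carrier G" using assms factor_carrier by blast
  have rep: "rep g \<in> factor K - C" using assms False g rep_in_factor rep_notin_C by blast
  then have "rep g \<in> A \<union> B - C" by (cases K) auto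
  moreover have "side (rep g) = K" using rep side_factor by blast
  ultimately show ?thesis
    using False assms mult_inv_rep_in_C[OF g] rep_rep[OF g] by (simp add: join_nf_def nf_tail_Cons)
qed (use assms in \<open>simp add: join_nf_def\<close>)

lemma split_join_nf:
  assumes "g \<in> factor K" "nf_tail ys" "\<not> starts_in K ys"
  shows "split_nf K (join_nf g ys) = (g, ys)"
proof (cases "g \<in> C")
  case False
  have g: "g \<in> carrier G" using assms factor_carrier by blast
  have "rep g \<in> factor K - C" using assms False g rep_in_factor rep_notin_C by blast
  then have "side (rep g) = K" using side_factor by blast
  then show ?thesis using False g rep_closed[OF g] by (simp add: join_nf_def m_assoc)
qed (use assms split_nf_not_starts_in in \<open>simp add: join_nf_def\<close>)

lemma join_split_nf:
  assumes "x \<in> normal_forms"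
  shows "join_nf (fst (split_nf K x)) (snd (split_nf K x)) = x"
proof -
  obtain c ss where x: "x = c # ss" "c \<in> C" "nf_tail ss" using assms by (rule normal_formsE)
  show ?thesis
  proof (cases ss)
    case Nil
    then show ?thesis using x by (simp add: join_nf_def)
  next
    case (Cons s ss')
    then have s: "s \<in> A \<union> B - C" "rep s = s" "s \<in> carrier G"
      using x AB_carrier by (auto simp: nf_tail_Cons)
    have "c \<otimes> s \<notin> C" using x s C_mult_left_iff by blast
    moreover have "rep (c \<otimes> s) = s" using x s rep_C_mult by simp
    ultimately show ?thesis using x Cons s C_carrier by (simp add: join_nf_def m_assoc)
  qed
qed

lemma factor_act_closed: "g \<in> factor K \<Longrightarrow> x \<in> normal_forms \<Longrightarrow> factor_act K g x \<in> normal_forms"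
  unfolding factor_act_def using split_nf_normal factor_m_closed by (blast intro: join_nf_normal)

lemma split_factor_act:
  assumes "g \<in> factor K" "x \<in> normal_forms"
  shows "split_nf K (factor_act K g x) = (g \<otimes> fst (split_nf K x), snd (split_nf K x))"
  unfolding factor_act_def using assms split_nf_normal factor_m_closed by (blast intro: split_join_nf)

lemma factor_act_mult:
  assumes "g \<in> factor K" "h \<in> factor K" "x \<in> normal_forms"
  shows "factor_act K g (factor_act K h x) = factor_act K (g \<otimes> h) x"
proof -
  have "fst (split_nf K x) \<in> carrier G" using split_nf_normal[OF assms(3)] factor_carrier by blast
  then show ?thesis
    using assms split_factor_act[OF assms(2,3)] by (simp add: factor_act_def m_assoc factor_carrier)
qed

lemma factor_act_one:
  assumes "x \<in> normal_forms"
  shows "factor_act K \<one> x = x"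
proof -
  have "fst (split_nf K x) \<in> carrier G" using split_nf_normal[OF assms] factor_carrier by blast
  then show ?thesis using join_split_nf[OF assms] by (simp add: factor_act_def)
qed

lemma factor_act_C:
  assumes "c \<in> C" "x \<in> normal_forms"
  shows "factor_act K c x = (c \<otimes> hd x) # tl x"
proof -
  obtain c' ss where x: "x = c' # ss" "c' \<in> C" "nf_tail ss" using assms(2) by (rule normal_formsE)
  have cc: "c \<in> carrier G" "c' \<in> carrier G" "c \<otimes> c' \<in> C" using assms x C_carrier C_m_closed by auto
  show ?thesis
  proof (cases "starts_in K ss")
    case True
    then obtain s ss' where ss: "ss = s # ss'" "side s = K" by (cases ss) auto
    then have s: "s \<in> A \<union> B - C" "rep s = s" "s \<in> carrier G"
      using x AB_carrier by (auto simp: nf_tail_Cons)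
    have "c \<otimes> c' \<otimes> s \<notin> C" using cc s C_mult_left_iff by blast
    moreover have "rep (c \<otimes> c' \<otimes> s) = s" using cc s rep_C_mult by simp
    ultimately show ?thesis using x ss s cc by (simp add: factor_act_def join_nf_def m_assoc)
  next
    case False
    then show ?thesis using x cc by (simp add: factor_act_def join_nf_def split_nf_not_starts_in)
  qed
qed

lemma letter_act_C: "c \<in> C \<Longrightarrow> x \<in> normal_forms \<Longrightarrow> letter_act c x = factor_act K c x"
  by (simp add: letter_act_def factor_act_C)

lemma letter_act_closed: "l \<in> A \<union> B \<Longrightarrow> x \<in> normal_forms \<Longrightarrow> letter_act l x \<in> normal_forms"
  unfolding letter_act_def by (rule factor_act_closed[OF in_factor_side])

lemma word_act_closed: "set ys \<subseteq> A \<union> B \<Longrightarrow> x \<in> normal_forms \<Longrightarrow> word_act ys x \<in> normal_forms"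
  by (induction ys) (simp_all add: letter_act_closed)

lemma word_act_split_nf:
  assumes "x \<in> normal_forms" "y \<in> normal_forms"
  shows "word_act x y = factor_act K (fst (split_nf K x)) (word_act (snd (split_nf K x)) y)"
proof -
  obtain c ss where x: "x = c # ss" "c \<in> C" "nf_tail ss" using assms(1) by (rule normal_formsE)
  have tail: "word_act ss y \<in> normal_forms"
    using x assms nf_tail_AB by (intro word_act_closed) auto
  show ?thesis
  proof (cases "starts_in K ss")
    case True
    then obtain s ss' where ss: "ss = s # ss'" "side s = K" by (cases ss) auto
    then have s: "s \<in> factor K" using x in_factor_side by (auto simp: nf_tail_Cons)
    have tail': "word_act ss' y \<in> normal_forms"
      using x ss assms nf_tail_AB[of "s # ss'"] by (intro word_act_closed) auto
    have "word_act x y = letter_act c (factor_act K s (word_act ss' y))"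
      using x ss by (simp add: letter_act_def)
    also have "\<dots> = factor_act K c (factor_act K s (word_act ss' y))"
      using letter_act_C x factor_act_closed[OF s tail'] by blast
    also have "\<dots> = factor_act K (c \<otimes> s) (word_act ss' y)"
      using factor_act_mult[OF C_subset_factor[OF x(2)] s tail'] .
    finally show ?thesis using x ss by simp
  next
    case False
    then show ?thesis using x letter_act_C[OF x(2) tail] by (simp add: split_nf_not_starts_in)
  qed
qed

lemma word_act_factor_act:
  assumes "g \<in> factor K" "x \<in> normal_forms" "y \<in> normal_forms"
  shows "word_act (factor_act K g x) y = factor_act K g (word_act x y)"
proof -
  have split: "fst (split_nf K x) \<in> factor K" "nf_tail (snd (split_nf K x))"
    using split_nf_normal[OF assms(2)] by auto
  have tail: "word_act (snd (split_nf K x)) y \<in> normal_forms"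
    using split(2) assms(3) nf_tail_AB by (intro word_act_closed) auto
  have "word_act (factor_act K g x) y = factor_act K (g \<otimes> fst (split_nf K x)) (word_act (snd (split_nf K x)) y)"
    using word_act_split_nf[OF factor_act_closed[OF assms(1,2)] assms(3), of K] split_factor_act[OF assms(1,2)]
    by simp
  also have "\<dots> = factor_act K g (word_act x y)"
    using factor_act_mult[OF assms(1) split(1) tail] word_act_split_nf[OF assms(2,3), of K] by simp
  finally show ?thesis .
qed

lemma word_act_assoc:
  assumes "set ys \<subseteq> A \<union> B" "x \<in> normal_forms" "z \<in> normal_forms"
  shows "word_act (word_act ys x) z = word_act ys (word_act x z)"
  using assms(1)
proof (induction ys)
  case (Cons l ys)
  have l: "l \<in> factor (side l)" using Cons in_factor_side by simp
  have "word_act ys x \<in> normal_forms" using Cons assms word_act_closed by simp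
  then show ?case
    using Cons word_act_factor_act[OF l _ assms(3)] by (simp add: letter_act_def)
qed simp

lemma word_act_nf_tail_one: "nf_tail ss \<Longrightarrow> word_act ss [\<one>] = \<one> # ss"
proof (induction ss)
  case (Cons s ss)
  then have s: "s \<in> A \<union> B - C" "rep s = s" "s \<in> carrier G" "\<not> starts_in (side s) ss" "nf_tail ss"
    using AB_carrier by (auto simp: nf_tail_Cons)
  then show ?case
    using Cons split_nf_not_starts_in[OF s(4)] by (simp add: letter_act_def factor_act_def join_nf_def)
qed simp

lemma word_act_one_right: "x \<in> normal_forms \<Longrightarrow> word_act x [\<one>] = x"
  by (auto elim!: normal_formsE simp: word_act_nf_tail_one letter_act_C[where K = True] factor_act_C
      C_carrier)

lemma letter_act_one: "y \<in> normal_forms \<Longrightarrow> letter_act \<one> y = y"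
  using factor_act_one by (simp add: letter_act_def)

lemma word_act_inv:
  assumes "set ys \<subseteq> A \<union> B" "y \<in> normal_forms"
  shows "word_act (rev (map (m_inv G) ys)) (word_act ys y) = y"
  using assms(1)
proof (induction ys)
  case (Cons l ys)
  have l: "l \<in> factor (side l)" "l \<in> carrier G" using Cons in_factor_side AB_carrier by auto
  have tail: "word_act ys y \<in> normal_forms" using Cons assms word_act_closed by simp
  have "letter_act (inv l) (letter_act l (word_act ys y)) = factor_act (side l) (inv l \<otimes> l) (word_act ys y)"
    using factor_act_mult[OF factor_inv_closed[OF l(1)] l(1) tail] side_inv[OF l(2)] by (simp add: letter_act_def)
  then show ?case using Cons tail l factor_act_one by simp
qed simp

definition nf_group :: "'a list monoid" where
  "nf_group = \<lparr>carrier = normal_forms, monoid.mult = word_act, one = [\<one>]\<rparr>"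

lemma group_nf_group: "group nf_group"
proof (rule groupI)
  fix x assume "x \<in> carrier nf_group"
  then have x: "x \<in> normal_forms" by (simp add: nf_group_def)
  have inv_AB: "set (rev (map (m_inv G) x)) \<subseteq> A \<union> B"
    using normal_forms_AB[OF x] subgroup.m_inv_closed[OF subgroup_A] subgroup.m_inv_closed[OF subgroup_B]
    by auto
  have "word_act (word_act (rev (map (m_inv G) x)) [\<one>]) x = word_act (rev (map (m_inv G) x)) (word_act [\<one>] x)"
    using word_act_assoc[OF inv_AB _ x] by simp
  also have "\<dots> = word_act (rev (map (m_inv G) x)) (word_act x [\<one>])"
    using letter_act_one[OF x] word_act_one_right[OF x] by simp
  also have "\<dots> = [\<one>]"
    using word_act_inv[OF normal_forms_AB[OF x]] by simp
  finally have "word_act (word_act (rev (map (m_inv G) x)) [\<one>]) x = [\<one>]" .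
  then show "\<exists>y\<in>carrier nf_group. y \<otimes>\<^bsub>nf_group\<^esub> x = \<one>\<^bsub>nf_group\<^esub>"
    using word_act_closed[OF inv_AB] by (auto simp: nf_group_def)
qed (auto simp: nf_group_def word_act_closed normal_forms_AB word_act_assoc letter_act_one)

lemma factor_act_hom: "(\<lambda>g. factor_act K g [\<one>]) \<in> hom (G\<lparr>carrier := factor K\<rparr>) nf_group"
proof (rule homI)
  fix g h assume "g \<in> carrier (G\<lparr>carrier := factor K\<rparr>)" "h \<in> carrier (G\<lparr>carrier := factor K\<rparr>)"
  then have g: "g \<in> factor K" and h: "h \<in> factor K" by simp_all
  have one: "[\<one>] \<in> normal_forms" by simp
  have "word_act (factor_act K g [\<one>]) (factor_act K h [\<one>]) = factor_act K g (factor_act K h [\<one>])"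
    using word_act_factor_act[OF g one factor_act_closed[OF h one]] letter_act_one factor_act_closed[OF h one]
    by simp
  then show "factor_act K (g \<otimes>\<^bsub>G\<lparr>carrier := factor K\<rparr>\<^esub> h) [\<one>] =
      factor_act K g [\<one>] \<otimes>\<^bsub>nf_group\<^esub> factor_act K h [\<one>]"
    using factor_act_mult[OF g h one] by (simp add: nf_group_def)
qed (simp add: nf_group_def factor_act_closed)

definition nf :: "'a \<Rightarrow> 'a list" where
  "nf = (SOME h. h \<in> hom G nf_group \<and> (\<forall>K. \<forall>g\<in>factor K. h g = factor_act K g [\<one>]))"

lemma nf_spec: "nf \<in> hom G nf_group \<and> (\<forall>K. \<forall>g\<in>factor K. nf g = factor_act K g [\<one>])"
proof -
  have "\<forall>c\<in>C. factor_act True c [\<one>] = factor_act False c [\<one>]"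
    by (simp add: factor_act_C)
  then obtain h where "h \<in> hom G nf_group"
    "\<forall>a\<in>A. h a = factor_act True a [\<one>]" "\<forall>b\<in>B. h b = factor_act False b [\<one>]"
    using universal_property[OF group_nf_group factor_act_hom[of True, simplified]
        factor_act_hom[of False, simplified]] by blast
  then have "\<exists>h. h \<in> hom G nf_group \<and> (\<forall>K. \<forall>g\<in>factor K. h g = factor_act K g [\<one>])"
    by (auto simp: factor_def)
  then show ?thesis unfolding nf_def by (rule someI_ex)
qed

lemma nf_closed: "g \<in> carrier G \<Longrightarrow> nf g \<in> normal_forms"
  using nf_spec hom_in_carrier by (fastforce simp: nf_group_def)

lemma nf_mult: "g \<in> carrier G \<Longrightarrow> h \<in> carrier G \<Longrightarrow> nf (g \<otimes> h) = word_act (nf g) (nf h)"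
  using nf_spec hom_mult by (fastforce simp: nf_group_def)

lemma nf_letter: "l \<in> A \<union> B \<Longrightarrow> nf l = letter_act l [\<one>]"
  using nf_spec in_factor_side by (simp add: letter_act_def)

lemma nf_one: "nf \<one> = [\<one>]"
  using nf_letter[of \<one>] letter_act_one[of "[\<one>]"] subgroup.one_closed[OF subgroup_A] by simp

lemma nf_letter_mult:
  assumes "l \<in> A \<union> B" "g \<in> carrier G"
  shows "nf (l \<otimes> g) = letter_act l (nf g)"
proof -
  have "nf (l \<otimes> g) = word_act (word_act [l] [\<one>]) (nf g)"
    using nf_mult[OF AB_carrier[OF assms(1)] assms(2)] nf_letter[OF assms(1)] by simp
  also have "\<dots> = word_act [l] (word_act [\<one>] (nf g))"
    using word_act_assoc[of "[l]"] assms nf_closed by simp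
  finally show ?thesis using letter_act_one nf_closed[OF assms(2)] by simp
qed

lemma list_prod_join_nf:
  "g \<in> carrier G \<Longrightarrow> set ys \<subseteq> carrier G \<Longrightarrow> list_prod G (join_nf g ys) = g \<otimes> list_prod G ys"
  using rep_closed by (simp add: join_nf_def m_assoc)

lemma list_prod_split_nf:
  assumes "x \<in> normal_forms"
  shows "list_prod G x = fst (split_nf K x) \<otimes> list_prod G (snd (split_nf K x))"
proof -
  obtain c ss where x: "x = c # ss" "c \<in> C" "nf_tail ss" using assms by (rule normal_formsE)
  have "set ss \<subseteq> carrier G" using x nf_tail_reduced reduced_carrier by blast
  then show ?thesis using x C_carrier by (cases ss) (auto simp: m_assoc)
qed

lemma list_prod_letter_act:
  assumes "l \<in> A \<union> B" "x \<in> normal_forms"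
  shows "list_prod G (letter_act l x) = l \<otimes> list_prod G x"
proof -
  let ?s = "split_nf (side l) x"
  have closed: "fst ?s \<in> carrier G" "set (snd ?s) \<subseteq> carrier G" "l \<in> carrier G"
    using split_nf_normal[OF assms(2)] factor_carrier nf_tail_reduced reduced_carrier AB_carrier assms(1)
    by blast+
  then have "list_prod G (letter_act l x) = l \<otimes> (fst ?s \<otimes> list_prod G (snd ?s))"
    by (simp add: letter_act_def factor_act_def list_prod_join_nf m_assoc)
  then show ?thesis using list_prod_split_nf[OF assms(2)] by simp
qed

lemma list_prod_word_act:
  assumes "set ys \<subseteq> A \<union> B" "x \<in> normal_forms"
  shows "list_prod G (word_act ys x) = list_prod G ys \<otimes> list_prod G x"
  using assms(1)
proof (induction ys)
  case Nil
  then show ?case using normal_forms_carrier[OF assms(2)] by simp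
next
  case (Cons l ys)
  have "set ys \<subseteq> carrier G" "l \<in> carrier G" using Cons AB_carrier by auto
  then show ?case
    using Cons list_prod_letter_act word_act_closed assms(2) normal_forms_carrier by (simp add: m_assoc)
qed

lemma list_prod_nf: assumes "g \<in> carrier G" shows "list_prod G (nf g) = g"
proof -
  have "g \<in> generate G (A \<union> B)" using generate_A_Un_B assms by simp
  then show ?thesis
  proof (induction rule: generate.induct)
    case one
    then show ?case by (simp add: nf_one)
  next
    case (incl h)
    then show ?case using nf_letter list_prod_letter_act AB_carrier by simp
  next
    case (inv h)
    then have "inv h \<in> A \<union> B"
      using subgroup.m_inv_closed[OF subgroup_A] subgroup.m_inv_closed[OF subgroup_B] by blast
    then show ?case using nf_letter list_prod_letter_act AB_carrier by simp
  next
    case (eng h1 h2)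
    then have "h1 \<in> carrier G" "h2 \<in> carrier G" using generate_A_Un_B by auto
    then show ?case using eng nf_mult list_prod_word_act normal_forms_AB nf_closed by simp
  qed
qed

section \<open>Reduced words and the RF property\<close>

definition begins_in :: "bool \<Rightarrow> 'a \<Rightarrow> bool" where
  "begins_in K g \<longleftrightarrow> starts_in K (tl (nf g))"

lemma not_begins_in_one: "\<not> begins_in K \<one>"
  by (simp add: begins_in_def nf_one)

lemma begins_in_imp_not_begins_in: "begins_in K g \<Longrightarrow> \<not> begins_in (\<not> K) g"
  by (auto simp: begins_in_def starts_in_def)

lemma begins_in_imp_ne_one: "begins_in K g \<Longrightarrow> g \<noteq> \<one>"
  using not_begins_in_one by blast

lemma begins_in_factor_mult:
  assumes l: "l \<in> factor K - C" and g: "g \<in> carrier G" "\<not> begins_in K g"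
  shows "begins_in K (l \<otimes> g)"
proof -
  obtain c ss where nf_g: "nf g = c # ss" "c \<in> C" and "\<not> starts_in K ss"
    using nf_closed[OF g(1)] g(2) by (auto elim!: normal_formsE simp: begins_in_def)
  then have "split_nf K (nf g) = (c, ss)" by (simp add: split_nf_not_starts_in)
  moreover have side_l: "side l = K" "l \<in> A \<union> B" using l side_factor by (auto simp: factor_def split: if_splits)
  ultimately have "nf (l \<otimes> g) = join_nf (l \<otimes> c) ss"
    using nf_letter_mult[OF side_l(2) g(1)] by (simp add: letter_act_def factor_act_def)
  moreover have lc: "l \<otimes> c \<in> factor K - C"
    using l nf_g C_subset_factor factor_m_closed C_mult_right_iff factor_carrier by auto
  moreover have "side (rep (l \<otimes> c)) = K"
    using lc rep_in_factor rep_notin_C factor_carrier side_factor by blast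
  ultimately show ?thesis by (simp add: begins_in_def join_nf_def)
qed

lemma begins_in_reduced_mult:
  assumes "reduced ys" "ys \<noteq> []" "g \<in> carrier G" "\<not> begins_in (side (last ys)) g"
  shows "begins_in (side (hd ys)) (list_prod G ys \<otimes> g)"
  using assms
proof (induction ys)
  case (Cons y ys)
  have y: "y \<in> factor (side y) - C" "y \<in> carrier G"
    using reduced_in_factor_side[OF Cons.prems(1)] reduced_carrier[OF Cons.prems(1)] by auto
  show ?case
  proof (cases "ys = []")
    case True
    then show ?thesis using Cons.prems begins_in_factor_mult[OF y(1)] y(2) by simp
  next
    case False
    have ys: "reduced ys" "side (hd ys) \<noteq> side y" "set ys \<subseteq> carrier G"
      using Cons.prems False reduced_carrier by (auto simp: reduced_Cons starts_in_def)
    then have "begins_in (side (hd ys)) (list_prod G ys \<otimes> g)" using Cons False by simp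
    moreover have "side y = (\<not> side (hd ys))" using ys(2) by blast
    ultimately have "\<not> begins_in (side y) (list_prod G ys \<otimes> g)"
      using begins_in_imp_not_begins_in by simp
    then have "begins_in (side y) (y \<otimes> (list_prod G ys \<otimes> g))"
      using begins_in_factor_mult[OF y(1)] ys(3) Cons.prems by simp
    then show ?thesis using y ys(3) Cons.prems by (simp add: m_assoc)
  qed
qed simp

definition opposite_words :: "bool \<Rightarrow> 'a set" where
  "opposite_words F =
    {list_prod G ys | ys. reduced ys \<and> ys \<noteq> [] \<and> side (hd ys) = (\<not> F) \<and> side (last ys) = (\<not> F)}"

lemma opposite_words_carrier: "w \<in> opposite_words F \<Longrightarrow> w \<in> carrier G"
  using reduced_carrier by (auto simp: opposite_words_def)

lemma begins_in_opposite_words_mult: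
  assumes "w \<in> opposite_words F" "g \<in> carrier G" "\<not> begins_in (\<not> F) g"
  shows "begins_in (\<not> F) (w \<otimes> g)"
proof -
  obtain ys where "w = list_prod G ys" "reduced ys" "ys \<noteq> []" "side (hd ys) = (\<not> F)" "side (last ys) = (\<not> F)"
    using assms(1) by (auto simp: opposite_words_def)
  then show ?thesis using begins_in_reduced_mult[of ys g] assms(2,3) by simp
qed

lemma pow_word_begins_in:
  assumes RF: "RF_words G C n x" and x: "x \<in> factor F - C"
  shows "admissible G (C \<union> opposite_words F) n ws \<Longrightarrow> snd (last ws) \<notin> C \<Longrightarrow> begins_in F (pow_word G x ws)"
proof (induction ws rule: length_induct)
  case (1 ws)
  have x_carrier: "x \<in> carrier G" using x factor_carrier by blast
  have ws_carrier: "\<forall>p\<in>set ws. snd p \<in> carrier G"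
    using "1.prems"(1) C_carrier opposite_words_carrier by (auto simp: admissible_def)
  have "\<exists>p\<in>set ws. snd p \<notin> C" using "1.prems" by (auto simp: admissible_def)
  then obtain seg q rest where ws: "ws = seg @ q # rest" and q: "snd q \<notin> C" and seg: "\<forall>p\<in>set seg. snd p \<in> C"
    using split_list_first_prop[of ws "\<lambda>p. snd p \<notin> C"] by blast
  have q_opp: "snd q \<in> opposite_words F" using "1.prems"(1) q by (auto simp: admissible_def ws)
  define S where "S = pow_word G x (seg @ [(fst q, \<one>)])"
  have "admissible G (C \<union> opposite_words F) n (seg @ [q])"
    using "1.prems"(1) admissible_infix[of G _ n "[]" "seg @ [q]" rest] by (simp add: ws)
  then have S: "S \<in> factor F - C"
    unfolding S_def using subgroup_factor C_subset_factor x seg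
    by (intro RF_words_pow_word_prefix[OF subgroup_C _ _ RF]) auto
  have "pow_word G x ws = S \<otimes> (snd q \<otimes> pow_word G x rest)"
    using ws_carrier x_carrier by (simp add: S_def ws pow_word_append m_assoc)
  moreover have "\<not> begins_in (\<not> F) (pow_word G x rest)"
  proof (cases "rest = []")
    case False
    have "admissible G (C \<union> opposite_words F) n rest"
      using "1.prems"(1) False admissible_infix[of G _ n "seg @ [q]" rest "[]"] by (simp add: ws)
    then have "begins_in F (pow_word G x rest)"
      using "1.IH" "1.prems"(2) False by (simp add: ws)
    then show ?thesis using begins_in_imp_not_begins_in by blast
  qed (simp add: not_begins_in_one)
  then have "begins_in (\<not> F) (snd q \<otimes> pow_word G x rest)"
    using begins_in_opposite_words_mult[OF q_opp] ws_carrier x_carrier by (simp add: ws)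
  then have "\<not> begins_in F (snd q \<otimes> pow_word G x rest)"
    using begins_in_imp_not_begins_in[of "\<not> F"] by simp
  moreover have "snd q \<otimes> pow_word G x rest \<in> carrier G"
    using ws_carrier x_carrier by (simp add: ws)
  ultimately show ?case
    using begins_in_factor_mult[OF S] by simp
qed

lemma pow_word_ne_one:
  assumes RF: "RF_words G C n x" and x: "x \<in> factor F - C"
    and ws: "cyclic_admissible G (C \<union> opposite_words F) n ws"
  shows "pow_word G x ws \<noteq> \<one>"
proof (cases "\<forall>p\<in>set ws. snd p \<in> C")
  case True
  then have "cyclic_admissible G C n ws" using ws by (auto simp: cyclic_admissible_def admissible_def)
  then show ?thesis using RF by (simp add: RF_words_def)
next
  case False
  then obtain xs p ys where ws_eq: "ws = xs @ p # ys" and p: "snd p \<notin> C" by (metis split_list)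
  have x_carrier: "x \<in> carrier G" using x factor_carrier by blast
  have carrier: "\<forall>p\<in>set ws. snd p \<in> carrier G"
    using ws C_carrier opposite_words_carrier by (auto simp: cyclic_admissible_def admissible_def)
  have "cyclic_admissible G (C \<union> opposite_words F) n (ys @ xs @ [p])"
    using cyclic_admissible_rotate[of G _ n "xs @ [p]" ys] ws by (simp add: ws_eq)
  then have "begins_in F (pow_word G x (ys @ xs @ [p]))"
    using pow_word_begins_in[OF RF x] p by (simp add: cyclic_admissible_def)
  then have "pow_word G x ys \<otimes> pow_word G x (xs @ [p]) \<noteq> \<one>"
    using begins_in_imp_ne_one carrier x_carrier by (simp add: ws_eq pow_word_append)
  then show ?thesis
    using carrier x_carrier inv_comm[of "pow_word G x (xs @ [p])" "pow_word G x ys"]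
    by (auto simp: ws_eq pow_word_append[symmetric])
qed

section \<open>Decomposition of elements outside A\<close>

lemma reduced_side_nth:
  assumes "reduced ms" "i < length ms"
  shows "side (ms ! i) \<longleftrightarrow> (side (ms ! 0) \<longleftrightarrow> even i)"
  using assms(2)
proof (induction i)
  case (Suc i)
  have "side (ms ! i) \<noteq> side (ms ! Suc i)"
    using assms(1) Suc.prems by (simp add: reduced_def successively_conv_nth)
  then show ?case using Suc by auto
qed simp

lemma reduced_same_ends_odd_length:
  assumes "reduced ms" "ms \<noteq> []" "side (hd ms) = side (last ms)"
  shows "odd (length ms)"
  using assms reduced_side_nth[OF assms(1), of "length ms - 1"]
  by (auto simp: hd_conv_nth last_conv_nth)

lemma reduced_decomposition_B_start:
  assumes a: "a \<in> carrier G" "a \<notin> A"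
  obtains \<alpha> ss where "\<alpha> \<in> A" "reduced ss" "ss \<noteq> []" "\<not> side (hd ss)" "a = \<alpha> \<otimes> list_prod G ss"
proof -
  obtain c ss where nf_a: "nf a = c # ss" "c \<in> C" "nf_tail ss" using nf_closed[OF a(1)] by (rule normal_formsE)
  have ss: "reduced ss" "set ss \<subseteq> carrier G" using nf_a nf_tail_reduced reduced_carrier by auto
  have c: "c \<in> A" "c \<in> carrier G" using nf_a C_subset_factor[of c True] C_carrier by auto
  have a_eq: "a = c \<otimes> list_prod G ss" using list_prod_nf[OF a(1)] nf_a by simp
  have "ss \<noteq> []" using a a_eq c by auto
  show ?thesis
  proof (cases "side (hd ss)")
    case True
    then obtain s ss' where ss_eq: "ss = s # ss'" "s \<in> A" using \<open>ss \<noteq> []\<close> by (cases ss) (auto simp: side_def)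
    have s: "s \<in> carrier G" "reduced ss'" "\<not> starts_in True ss'" "set ss' \<subseteq> carrier G"
      using ss ss_eq True by (auto simp: reduced_Cons)
    have cs: "c \<otimes> s \<in> A" using c ss_eq subgroup.m_closed[OF subgroup_A] by blast
    have a_eq': "a = (c \<otimes> s) \<otimes> list_prod G ss'" using a_eq ss_eq s c by (simp add: m_assoc)
    then have "ss' \<noteq> []" using a cs c s by auto
    then show ?thesis using that[OF cs s(2) _ _ a_eq'] s(3) by (cases ss') auto
  next
    case False
    then show ?thesis using that[OF c(1) ss(1) \<open>ss \<noteq> []\<close>] a_eq by simp
  qed
qed

lemma reduced_split_last_A:
  assumes ss: "reduced ss" "ss \<noteq> []" "\<not> side (hd ss)"
  obtains ms \<beta> where "\<beta> \<in> A" "reduced ms" "ms \<noteq> []" "\<not> side (hd ms)" "\<not> side (last ms)"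
    "list_prod G ss = list_prod G ms \<otimes> \<beta>"
proof (cases "side (last ss)")
  case True
  obtain ms s where ss_eq: "ss = ms @ [s]" using ss(2) by (metis rev_exhaust)
  have "ms \<noteq> []" using ss_eq True ss(3) by auto
  moreover have "reduced ms" "s \<in> A" "\<not> side (last ms)"
    using ss(1) True \<open>ms \<noteq> []\<close> by (simp_all add: ss_eq reduced_append side_def)
  moreover have "list_prod G ss = list_prod G ms \<otimes> s"
    using reduced_carrier[OF ss(1)] by (simp add: ss_eq list_prod_append)
  ultimately show ?thesis using that[of s ms] ss(3) by (simp add: ss_eq)
next
  case False
  then show ?thesis
    using that[of \<one> ss] ss reduced_carrier[OF ss(1)] subgroup.one_closed[OF subgroup_A] by simp
qed

lemma reduced_decomposition:
  assumes "a \<in> carrier G" "a \<notin> A"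
  obtains \<alpha> \<beta> us x vs where "\<alpha> \<in> A" "\<beta> \<in> A" "reduced (us @ x # vs)" "length us = length vs"
    "\<not> side (hd (us @ x # vs))" "\<not> side (last (us @ x # vs))"
    "a = \<alpha> \<otimes> list_prod G us \<otimes> x \<otimes> list_prod G vs \<otimes> \<beta>"
proof -
  obtain \<alpha> ss where ss: "\<alpha> \<in> A" "reduced ss" "ss \<noteq> []" "\<not> side (hd ss)" "a = \<alpha> \<otimes> list_prod G ss"
    using reduced_decomposition_B_start[OF assms] .
  obtain \<beta> ms where "\<beta> \<in> A" "reduced ms" "ms \<noteq> []" "\<not> side (hd ms)" "\<not> side (last ms)"
    "list_prod G ss = list_prod G ms \<otimes> \<beta>"
    using reduced_split_last_A[OF ss(2-4)] by blast
  then have ms: "\<alpha> \<in> A" "\<beta> \<in> A" "reduced ms" "ms \<noteq> []" "\<not> side (hd ms)" "\<not> side (last ms)"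
    "a = \<alpha> \<otimes> list_prod G ms \<otimes> \<beta>"
    using ss reduced_carrier subgroup.mem_carrier[OF subgroup_A] by (auto simp: m_assoc)
  then obtain r where len: "length ms = Suc (2 * r)"
    using reduced_same_ends_odd_length[OF ms(3,4)] by (metis oddE Suc_eq_plus1)
  define us x vs where "us = take r ms" and "x = ms ! r" and "vs = drop (Suc r) ms"
  have ms_eq: "ms = us @ x # vs" using id_take_nth_drop[of r ms] len by (simp add: us_def x_def vs_def)
  have closed: "set us \<subseteq> carrier G" "x \<in> carrier G" "set vs \<subseteq> carrier G" "\<alpha> \<in> carrier G" "\<beta> \<in> carrier G"
    using reduced_carrier[OF ms(3)] ms(1,2) subgroup.mem_carrier[OF subgroup_A] by (auto simp: ms_eq)
  have "a = \<alpha> \<otimes> list_prod G us \<otimes> x \<otimes> list_prod G vs \<otimes> \<beta>"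
    using ms(7) closed by (simp add: ms_eq list_prod_append m_assoc)
  moreover have "length us = length vs" using len by (simp add: us_def vs_def)
  ultimately show ?thesis using that ms ms_eq by metis
qed

lemma reduced_insert_letter:
  assumes ps: "reduced ps" "ps \<noteq> [] \<Longrightarrow> side (last ps) = (\<not> K)"
    and qs: "reduced qs" "qs \<noteq> [] \<Longrightarrow> side (hd qs) = (\<not> K)"
    and \<delta>: "\<delta> \<in> factor K - C"
  shows "reduced (ps @ \<delta> # qs) \<and> list_prod G (ps @ \<delta> # qs) = list_prod G ps \<otimes> \<delta> \<otimes> list_prod G qs \<and>
    side (hd (ps @ \<delta> # qs)) = (if ps = [] then K else side (hd ps)) \<and>
    side (last (ps @ \<delta> # qs)) = (if qs = [] then K else side (last qs))"
proof -
  have side_\<delta>: "side \<delta> = K" using \<delta> side_factor by blast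
  moreover have "\<delta> \<in> A \<union> B - C" using \<delta> by (cases K) auto
  ultimately have "reduced (ps @ \<delta> # qs)"
    using ps qs by (auto simp: reduced_append reduced_Cons starts_in_def)
  moreover have "list_prod G (ps @ \<delta> # qs) = list_prod G ps \<otimes> \<delta> \<otimes> list_prod G qs"
    using reduced_carrier[OF ps(1)] reduced_carrier[OF qs(1)] factor_carrier[of \<delta> K] \<delta>
    by (simp add: list_prod_append m_assoc)
  ultimately show ?thesis using side_\<delta> by (simp add: hd_append)
qed

lemma reduced_sandwich:
  assumes "length ps = length qs" "reduced ps" "reduced qs" "\<delta> \<in> factor K"
    "ps \<noteq> [] \<Longrightarrow> side (last ps) = (\<not> K) \<and> side (hd qs) = (\<not> K)"
  shows "list_prod G ps \<otimes> \<delta> \<otimes> list_prod G qs \<in> C \<or>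
    (\<exists>ys. reduced ys \<and> ys \<noteq> [] \<and> list_prod G ps \<otimes> \<delta> \<otimes> list_prod G qs = list_prod G ys \<and>
       side (hd ys) = (if ps = [] then K else side (hd ps)) \<and>
       side (last ys) = (if qs = [] then K else side (last qs)))"
  using assms
proof (induction ps arbitrary: qs \<delta> K rule: rev_induct)
  case Nil
  moreover have "\<delta> \<in> carrier G" using Nil.prems(4) factor_carrier by blast
  ultimately show ?case
    using reduced_insert_letter[of "[]" K "[]" \<delta>] by (cases "\<delta> \<in> C") (auto intro!: exI[of _ "[\<delta>]"])
next
  case (snoc p ps)
  obtain q qs' where qs: "qs = q # qs'" using snoc.prems(1) by (cases qs) auto
  have sides: "side p = (\<not> K)" "side q = (\<not> K)" using snoc.prems(5) by (simp_all add: qs)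
  show ?case
  proof (cases "\<delta> \<in> C")
    case False
    then have "\<delta> \<in> factor K - C" using snoc.prems(4) by blast
    moreover have "ps @ [p] \<noteq> [] \<Longrightarrow> side (last (ps @ [p])) = (\<not> K)"
      and "qs \<noteq> [] \<Longrightarrow> side (hd qs) = (\<not> K)"
      using sides by (simp_all add: qs)
    ultimately show ?thesis
      using reduced_insert_letter[OF snoc.prems(2) _ snoc.prems(3)]
      by - (rule disjI2, rule exI[of _ "(ps @ [p]) @ \<delta> # qs"], simp)
  next
    case True
    \<comment> \<open>The middle element lies in C, so it merges with its neighbours p and q into one
      element of the other factor; recurse on the shorter words.\<close>
    have red: "reduced ps" "p \<in> A \<union> B - C" "reduced qs'" "q \<in> A \<union> B - C"
      "ps \<noteq> [] \<Longrightarrow> side (last ps) = K" "qs' \<noteq> [] \<Longrightarrow> side (hd qs') = K"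
      using snoc.prems(2,3) sides by (auto simp: reduced_append reduced_Cons qs starts_in_def)
    have "p \<in> factor (\<not> K)" "q \<in> factor (\<not> K)"
      using red(2,4) sides in_factor_side[of p] in_factor_side[of q] by auto
    then have pdq: "p \<otimes> \<delta> \<otimes> q \<in> factor (\<not> K)"
      using C_subset_factor[OF True] factor_m_closed by blast
    have len: "length ps = length qs'" using snoc.prems(1) by (simp add: qs)
    have "ps \<noteq> [] \<Longrightarrow> side (last ps) = (\<not> \<not> K) \<and> side (hd qs') = (\<not> \<not> K)"
      using red(5,6) len by (cases qs') auto
    note IH = snoc.IH[OF len red(1,3) pdq this]
    have "list_prod G (ps @ [p]) \<otimes> \<delta> \<otimes> list_prod G qs = list_prod G ps \<otimes> (p \<otimes> \<delta> \<otimes> q) \<otimes> list_prod G qs'"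
      using red reduced_carrier AB_carrier snoc.prems(4) factor_carrier by (simp add: list_prod_append m_assoc qs)
    moreover have "(if ps = [] then \<not> K else side (hd ps)) = side (hd (ps @ [p]))"
      "(if qs' = [] then \<not> K else side (last qs')) = side (last qs)"
      using sides by (simp_all add: hd_append qs)
    ultimately show ?thesis using IH by (simp add: qs)
  qed
qed

lemma reduced_inv_word:
  assumes "reduced ys"
  shows "inv (list_prod G ys) = list_prod G (rev (map (m_inv G) ys))" "reduced (rev (map (m_inv G) ys))"
    "ys \<noteq> [] \<Longrightarrow> side (hd (rev (map (m_inv G) ys))) = side (last ys)"
    "ys \<noteq> [] \<Longrightarrow> side (last (rev (map (m_inv G) ys))) = side (hd ys)"
proof -
  have ys: "\<forall>y\<in>set ys. y \<in> A \<union> B - C \<and> y \<in> carrier G" using assms AB_carrier by (auto simp: reduced_def)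
  then show "inv (list_prod G ys) = list_prod G (rev (map (m_inv G) ys))" by (simp add: inv_list_prod subset_iff)
  have "inv y \<in> A \<union> B - C" if "y \<in> set ys" for y
    using ys that subgroup.m_inv_closed[OF subgroup_A] subgroup.m_inv_closed[OF subgroup_B] C_inv_closed
    by (metis DiffE DiffI Un_iff inv_inv)
  moreover have "successively (\<lambda>s t. side (inv t) \<noteq> side (inv s)) ys"
    using assms ys side_inv by (auto simp: reduced_def elim!: successively_mono)
  ultimately show "reduced (rev (map (m_inv G) ys))" by (auto simp: reduced_def successively_map)
  show "ys \<noteq> [] \<Longrightarrow> side (hd (rev (map (m_inv G) ys))) = side (last ys)"
    "ys \<noteq> [] \<Longrightarrow> side (last (rev (map (m_inv G) ys))) = side (hd ys)"
    using ys side_inv by (simp_all add: hd_rev last_rev hd_map last_map)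
qed

text \<open>An element a outside A is written below as a = U x V with x in A \<union> B - C, where U is an
  element of A followed by a reduced word and V is a reduced word of the same length m followed by an
  element of A. Here F is the side of x; for m = 0 the letter x itself must lie in B - C.\<close>

definition A_word_form :: "bool \<Rightarrow> nat \<Rightarrow> 'a \<Rightarrow> bool" where
  "A_word_form F m L \<longleftrightarrow> (\<exists>\<gamma> qs. L = \<gamma> \<otimes> list_prod G qs \<and> \<gamma> \<in> A \<and> reduced qs \<and> length qs = m \<and>
     (if qs = [] then \<not> F else \<not> side (hd qs) \<and> side (last qs) = (\<not> F)))"

definition word_A_form :: "bool \<Rightarrow> nat \<Rightarrow> 'a \<Rightarrow> bool" where
  "word_A_form F m R \<longleftrightarrow> (\<exists>ps \<rho>. R = list_prod G ps \<otimes> \<rho> \<and> \<rho> \<in> A \<and> reduced ps \<and> length ps = m \<and>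
     (if ps = [] then \<not> F else \<not> side (last ps) \<and> side (hd ps) = (\<not> F)))"

lemma A_word_form_closed: "A_word_form F m L \<Longrightarrow> L \<in> carrier G"
  using reduced_carrier subgroup.mem_carrier[OF subgroup_A] by (auto simp: A_word_form_def)

lemma word_A_form_closed: "word_A_form F m R \<Longrightarrow> R \<in> carrier G"
  using reduced_carrier subgroup.mem_carrier[OF subgroup_A] by (auto simp: word_A_form_def)

lemma A_word_form_inv:
  assumes "A_word_form F m L"
  shows "word_A_form F m (inv L)"
proof -
  obtain \<gamma> qs where L: "L = \<gamma> \<otimes> list_prod G qs" "\<gamma> \<in> A" "reduced qs" "length qs = m"
    "if qs = [] then \<not> F else \<not> side (hd qs) \<and> side (last qs) = (\<not> F)"
    using assms by (auto simp: A_word_form_def)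
  have "inv L = list_prod G (rev (map (m_inv G) qs)) \<otimes> inv \<gamma>"
    using L(1-3) reduced_carrier reduced_inv_word(1) subgroup.mem_carrier[OF subgroup_A] by (simp add: inv_mult_group)
  then show ?thesis
    unfolding word_A_form_def using L(2-5) reduced_inv_word[OF L(3)] subgroup.m_inv_closed[OF subgroup_A]
    by (intro exI[of _ "rev (map (m_inv G) qs)"] exI[of _ "inv \<gamma>"]) (auto split: if_splits)
qed

lemma word_A_form_inv:
  assumes "word_A_form F m R"
  shows "A_word_form F m (inv R)"
proof -
  obtain ps \<rho> where R: "R = list_prod G ps \<otimes> \<rho>" "\<rho> \<in> A" "reduced ps" "length ps = m"
    "if ps = [] then \<not> F else \<not> side (last ps) \<and> side (hd ps) = (\<not> F)"
    using assms by (auto simp: word_A_form_def)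
  have "inv R = inv \<rho> \<otimes> list_prod G (rev (map (m_inv G) ps))"
    using R(1-3) reduced_carrier reduced_inv_word(1) subgroup.mem_carrier[OF subgroup_A] by (simp add: inv_mult_group)
  then show ?thesis
    unfolding A_word_form_def using R(2-5) reduced_inv_word[OF R(3)] subgroup.m_inv_closed[OF subgroup_A]
    by (intro exI[of _ "inv \<rho>"] exI[of _ "rev (map (m_inv G) ps)"]) (auto split: if_splits)
qed

lemma word_A_form_mult_A_word_form:
  assumes "word_A_form F m R" "A_word_form F m L" "d \<in> A"
  shows "R \<otimes> d \<otimes> L \<in> C \<union> opposite_words F"
proof -
  obtain ps \<rho> where R: "R = list_prod G ps \<otimes> \<rho>" "\<rho> \<in> A" "reduced ps" "length ps = m"
    "if ps = [] then \<not> F else \<not> side (last ps) \<and> side (hd ps) = (\<not> F)"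
    using assms(1) by (auto simp: word_A_form_def)
  obtain \<gamma> qs where L: "L = \<gamma> \<otimes> list_prod G qs" "\<gamma> \<in> A" "reduced qs" "length qs = m"
    "if qs = [] then \<not> F else \<not> side (hd qs) \<and> side (last qs) = (\<not> F)"
    using assms(2) by (auto simp: A_word_form_def)
  have "\<rho> \<otimes> d \<otimes> \<gamma> \<in> factor True"
    using R(2) L(2) assms(3) subgroup.m_closed[OF subgroup_A] by simp
  moreover have "ps = [] \<longleftrightarrow> qs = []" using R(4) L(4) by auto
  ultimately have "list_prod G ps \<otimes> (\<rho> \<otimes> d \<otimes> \<gamma>) \<otimes> list_prod G qs \<in> C \<union> opposite_words F"
    using reduced_sandwich[of ps qs "\<rho> \<otimes> d \<otimes> \<gamma>" True] R L by (auto simp: opposite_words_def split: if_splits)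
  moreover have "R \<otimes> d \<otimes> L = list_prod G ps \<otimes> (\<rho> \<otimes> d \<otimes> \<gamma>) \<otimes> list_prod G qs"
    using R L assms(3) reduced_carrier subgroup.mem_carrier[OF subgroup_A] by (simp add: m_assoc)
  ultimately show ?thesis by simp
qed

lemma conjugating_decomposition:
  assumes "a \<in> carrier G" "a \<notin> A"
  obtains U x V m where "a = U \<otimes> x \<otimes> V" "x \<in> A \<union> B - C" "A_word_form (side x) m U" "word_A_form (side x) m V"
proof -
  obtain \<alpha> \<beta> us x vs where dec: "\<alpha> \<in> A" "\<beta> \<in> A" "reduced (us @ x # vs)" "length us = length vs"
    "\<not> side (hd (us @ x # vs))" "\<not> side (last (us @ x # vs))"
    "a = \<alpha> \<otimes> list_prod G us \<otimes> x \<otimes> list_prod G vs \<otimes> \<beta>"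
    using reduced_decomposition[OF assms] .
  have red: "reduced us" "reduced vs" "x \<in> A \<union> B - C"
    using dec(3) by (auto simp: reduced_append reduced_Cons)
  have "if us = [] then \<not> side x else \<not> side (hd us) \<and> side (last us) = (\<not> side x)"
    using dec(3,5) by (auto simp: reduced_append reduced_Cons)
  then have U: "A_word_form (side x) (length us) (\<alpha> \<otimes> list_prod G us)"
    unfolding A_word_form_def using dec(1) red(1) by blast
  have "if vs = [] then \<not> side x else \<not> side (last vs) \<and> side (hd vs) = (\<not> side x)"
    using dec(3,6) by (auto simp: reduced_append reduced_Cons starts_in_def)
  then have V: "word_A_form (side x) (length us) (list_prod G vs \<otimes> \<beta>)"
    unfolding word_A_form_def using dec(2) dec(4)[symmetric] red(2) by blast
  have "a = (\<alpha> \<otimes> list_prod G us) \<otimes> x \<otimes> (list_prod G vs \<otimes> \<beta>)"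
    using dec(1,2,7) red reduced_carrier AB_carrier subgroup.mem_carrier[OF subgroup_A] by (simp add: m_assoc)
  then show ?thesis by (rule that[OF _ red(3) U V])
qed

theorem n_RF_rel_outside_A:
  assumes RF: "\<And>x. x \<in> A \<union> B - C \<Longrightarrow> RF_words G C n x" and a: "a \<in> carrier G - A"
  shows "n_RF_rel G A n a"
  unfolding n_RF_rel_def
proof (intro conjI allI impI)
  show "a \<in> carrier G - A" by (rule a)
  fix k :: nat and e :: "nat \<Rightarrow> int" and d :: "nat \<Rightarrow> 'a"
  assume k: "1 \<le> k" and ed: "\<forall>i<k. e i \<in> {1, -1} \<and> d i \<in> A"
    and nc: "\<forall>i<k. e i = - e (Suc i mod k) \<longrightarrow> d i \<noteq> \<one>"
    and counts: "enat (card {i. i < k \<and> e i = 1}) < n" "enat (card {i. i < k \<and> e i = -1}) < n"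
  have a_cases: "a \<in> carrier G" "a \<notin> A" using a by auto
  obtain U x V m where x: "a = U \<otimes> x \<otimes> V" "x \<in> A \<union> B - C"
    and forms: "A_word_form (side x) m U" "word_A_form (side x) m V"
    using conjugating_decomposition[OF a_cases] by blast
  have UV: "U \<in> carrier G" "V \<in> carrier G" using forms A_word_form_closed word_A_form_closed by blast+
  have x_carrier: "x \<in> carrier G" using x(2) AB_carrier by blast
  have x_factor: "x \<in> factor (side x) - C" using x(2) in_factor_side by blast
  have d_carrier: "\<And>i. i < k \<Longrightarrow> d i \<in> carrier G" using ed subgroup.mem_carrier[OF subgroup_A] by blast
  define l r where "l v = (if v = 1 then U else inv V)" and "r v = (if v = 1 then V else inv U)" for v :: int
  define J where "J i = r (e i) \<otimes> d i \<otimes> l (e (Suc i mod k))" for i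
  have e: "e i \<in> {1, -1}" "e (Suc i mod k) \<in> {1, -1}" "d i \<in> A" if "i < k" for i
    using ed that k by auto
  have conj: "rf_word G a k e d = l (e 0) \<otimes> rf_word G x k e J \<otimes> inv (l (e 0))"
    unfolding x(1) J_def l_def r_def by (rule rf_word_sandwich[OF UV(1) x_carrier UV(2) d_carrier k e(1)])
  have lr: "l v \<in> carrier G" "r v \<in> carrier G" for v using UV by (simp_all add: l_def r_def)
  have l_neg: "l (- v) = inv (r v)" if "v \<in> {1, -1}" for v
    using that UV by (auto simp: l_def r_def)
  have "J i \<in> C \<union> opposite_words (side x)" "e i = - e (Suc i mod k) \<longrightarrow> J i \<noteq> \<one>" if "i < k" for i
  proof -
    have "word_A_form (side x) m (r v)" "A_word_form (side x) m (l v)" for v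
      using forms A_word_form_inv word_A_form_inv by (simp_all add: l_def r_def)
    then show "J i \<in> C \<union> opposite_words (side x)"
      unfolding J_def using e[OF that] by (intro word_A_form_mult_A_word_form)
    \<comment> \<open>Where the exponents of consecutive letters cancel, J i is a conjugate of d i.\<close>
    show "e i = - e (Suc i mod k) \<longrightarrow> J i \<noteq> \<one>"
      using nc that e[OF that] l_neg[of "e i"] lr d_carrier[OF that] by (auto simp: J_def conj_eq_one_iff)
  qed
  then have "cyclic_admissible G (C \<union> opposite_words (side x)) n (map (\<lambda>i. (e i, J i)) [0..<k])"
    using k ed counts by (simp add: cyclic_admissible_upt_iff)
  then have "rf_word G x k e J \<noteq> \<one>"
    using pow_word_ne_one[OF RF[OF x(2)] x_factor] by (simp add: rf_word_eq_pow_word)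
  moreover have "rf_word G x k e J \<in> carrier G"
    using x_carrier lr d_carrier by (simp add: rf_word_eq_pow_word J_def)
  ultimately show "rf_word G a k e d \<noteq> \<one>" using conj lr by (simp add: conj_eq_one_iff)
qed

end

lemma amalgamated_free_product_swap:
  assumes "amalgamated_free_product G A B C"
  shows "amalgamated_free_product G B A C"
  unfolding amalgamated_free_product_def
proof (intro conjI allI impI)
  show "group G" "subgroup B G" "subgroup A G" "B \<inter> A = C" "generate G (B \<union> A) = carrier G"
    using assms by (auto simp: amalgamated_free_product_def Un_commute)
  fix H :: "'a list monoid" and f g
  assume "group H" "f \<in> hom (G\<lparr>carrier := B\<rparr>) H" "g \<in> hom (G\<lparr>carrier := A\<rparr>) H" "\<forall>c\<in>C. f c = g c"
  moreover have "\<forall>c\<in>C. g c = f c" using calculation by simp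
  ultimately obtain h where "h \<in> hom G H" "\<forall>a\<in>A. h a = g a" "\<forall>b\<in>B. h b = f b"
    using assms unfolding amalgamated_free_product_def by blast
  then show "\<exists>h\<in>hom G H. (\<forall>a\<in>B. h a = f a) \<and> (\<forall>b\<in>A. h b = g b)" by blast
qed

lemma (in group) n_RF_pair_imp_RF_words:
  assumes "subgroup H G" "n_RF_pair (G\<lparr>carrier := H\<rparr>) D n" "x \<in> H - D"
  shows "RF_words G D n x"
  using assms RF_words_subgroup_iff[of H x D n] by (simp add: n_RF_pair_def n_RF_rel_iff_RF_words)

theorem proposition5p24:
  fixes G :: "('a, 'm) monoid_scheme" and A B C :: "'a set" and n :: enat
  assumes "amalgamated_free_product G A B C"
    and "2 \<le> n"
    and "n_RF_pair (G\<lparr>carrier := A\<rparr>) C n"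
    and "n_RF_pair (G\<lparr>carrier := B\<rparr>) C n"
  shows "n_RF_pair G A n \<and> n_RF_pair G B n"
proof -
  have "group G" using assms(1) by (simp add: amalgamated_free_product_def)
  interpret AB: amalgam G A B C
    using \<open>group G\<close> assms(1) by (simp add: amalgam_def amalgam_axioms_def)
  interpret BA: amalgam G B A C
    using \<open>group G\<close> amalgamated_free_product_swap[OF assms(1)] by (simp add: amalgam_def amalgam_axioms_def)
  have "RF_words G C n x" if "x \<in> A \<union> B - C" for x
    using that AB.n_RF_pair_imp_RF_words AB.subgroup_A AB.subgroup_B assms(3,4) by blast
  then show ?thesis
    unfolding n_RF_pair_def using AB.n_RF_rel_outside_A BA.n_RF_rel_outside_A by blast
qed

end
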